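(* There is a constant $C>0$ such that the following holds. Let $\epsilon\in(0,1)$, let $\ell,q\ge0$ be integers, and let $\mathcal B=(\mathcal L,\mathcal Q)$ be a quadratic factor on $G=\mathbb{F}_p^n$ of complexity $(\ell,q)$ and rank at least $C(\ell+q+\log_p(\epsilon^{-1}))$. Then for every $B\in\mathrm{At}(\mathcal B)$, $$|\Omega_B|=(1\pm\epsilon)p^{4n-4\ell-7q},$$ i.e. $\big||\Omega_B|-p^{4n-4\ell-7q}\big|\le\epsilon p^{4n-4\ell-7q}$.
   Context: $p$ is an odd prime. Quadratic factors: For $\ell\ge1$, a linear factor of complexity $\ell$ on $\mathbb{F}_p^n$ is a linearly independent set $\mathcal{L}=\{r_1,\dots,r_\ell\}\subseteq\mathbb{F}_p^n$ (with a fixed enumeration); the linear factor of complexity $0$ is $\emptyset$. Put $\beta_{\mathcal L}(x)=(x\cdot r_1,\dots,x\cdot r_\ell)\in\mathbb{F}_p^\ell$ (the zero map to $\mathbb{F}_p^0$ if $\ell=0$). For $q\ge 1$, a purely quadratic factor of complexity $q$ is a set $\mathcal{Q}=\{M_1,\dots,M_q\}$ of pairwise distinct symmetric $n\times n$ matrices over $\mathbb{F}_p$ (the empty set if $q=0$); put $\beta_{\mathcal Q}(x,y)=(x^TM_1y,\dots,x^TM_qy)\in\mathbb{F}_p^q$. The rank of $\mathcal Q$ is $n$ if $q=0$, and otherwise the minimum of $\mathrm{rk}(\lambda_1M_1+\dots+\lambda_qM_q)$ over $(\lambda_1,\dots,\lambda_q)\neq 0$. A quadratic factor of complexity $(\ell,q)$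 is a pair $\mathcal{B}=(\mathcal L,\mathcal Q)$ of these; its rank is the rank of $\mathcal Q$; $\beta_{\mathcal B}(x)=(\beta_{\mathcal L}(x),\beta_{\mathcal Q}(x,x))$; its atoms are the sets $B(a,b)=\beta_{\mathcal B}^{-1}(a,b)$, and $\mathrm{At}(\mathcal B)$ is the set of atoms. $\Omega_B=\{(x,h_1,h_2,h_3)\in G^4: x+\omega_1h_1+\omega_2h_2+\omega_3h_3\in B \text{ for all }\omega\in\{0,1\}^3\}$. *)

theory Defs
  imports Complex_Main "HOL-Computational_Algebra.Primes"
begin

text \<open>Explicit model of F_p^n: vectors are functions nat => int with entries in
  {0..<p} at coordinates below n and 0 elsewhere; arithmetic is taken mod p.\<close>

definition Fpn :: "nat \<Rightarrow> nat \<Rightarrow> (nat \<Rightarrow> int) set" where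
  "Fpn p n = {x. (\<forall>i<n. 0 \<le> x i \<and> x i < int p) \<and> (\<forall>i. n \<le> i \<longrightarrow> x i = 0)}"

definition vadd :: "nat \<Rightarrow> (nat \<Rightarrow> int) \<Rightarrow> (nat \<Rightarrow> int) \<Rightarrow> (nat \<Rightarrow> int)" where
  "vadd p x y = (\<lambda>i. (x i + y i) mod int p)"

definition dotp :: "nat \<Rightarrow> nat \<Rightarrow> (nat \<Rightarrow> int) \<Rightarrow> (nat \<Rightarrow> int) \<Rightarrow> int" where
  "dotp p n x y = (\<Sum>i<n. x i * y i) mod int p"

definition Matp :: "nat \<Rightarrow> nat \<Rightarrow> (nat \<Rightarrow> nat \<Rightarrow> int) set" where
  "Matp p n = {M. (\<forall>i<n. \<forall>j<n. 0 \<le> M i j \<and> M i j < int p) \<and>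
                  (\<forall>i j. \<not> (i < n \<and> j < n) \<longrightarrow> M i j = 0)}"

definition symmetric_mat :: "nat \<Rightarrow> (nat \<Rightarrow> nat \<Rightarrow> int) \<Rightarrow> bool" where
  "symmetric_mat n M \<longleftrightarrow> (\<forall>i<n. \<forall>j<n. M i j = M j i)"

definition bilin :: "nat \<Rightarrow> nat \<Rightarrow> (nat \<Rightarrow> nat \<Rightarrow> int) \<Rightarrow> (nat \<Rightarrow> int) \<Rightarrow> (nat \<Rightarrow> int) \<Rightarrow> int" where
  "bilin p n M x y = (\<Sum>i<n. \<Sum>j<n. x i * M i j * y j) mod int p"

definition lin_indep_Fp :: "nat \<Rightarrow> nat \<Rightarrow> nat set \<Rightarrow> (nat \<Rightarrow> nat \<Rightarrow> int) \<Rightarrow> bool" where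
  "lin_indep_Fp p n S v \<longleftrightarrow>
     (\<forall>c. (\<forall>k\<in>S. 0 \<le> c k \<and> c k < int p) \<and>
          (\<forall>i<n. (\<Sum>k\<in>S. c k * v k i) mod int p = 0) \<longrightarrow> (\<forall>k\<in>S. c k = 0))"

definition mat_rank :: "nat \<Rightarrow> nat \<Rightarrow> (nat \<Rightarrow> nat \<Rightarrow> int) \<Rightarrow> nat" where
  "mat_rank p n M = Max {card S | S. S \<subseteq> {..<n} \<and> lin_indep_Fp p n S (\<lambda>k i. M i k)}"

definition is_linear_factor :: "nat \<Rightarrow> nat \<Rightarrow> (nat \<Rightarrow> int) list \<Rightarrow> bool" where
  "is_linear_factor p n rs \<longleftrightarrow> set rs \<subseteq> Fpn p n \<and> lin_indep_Fp p n {..<length rs} (\<lambda>k. rs ! k)"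

definition is_purely_quadratic_factor :: "nat \<Rightarrow> nat \<Rightarrow> (nat \<Rightarrow> nat \<Rightarrow> int) list \<Rightarrow> bool" where
  "is_purely_quadratic_factor p n Ms \<longleftrightarrow>
     distinct Ms \<and> (\<forall>M\<in>set Ms. M \<in> Matp p n \<and> symmetric_mat n M)"

definition quad_rank :: "nat \<Rightarrow> nat \<Rightarrow> (nat \<Rightarrow> nat \<Rightarrow> int) list \<Rightarrow> nat" where
  "quad_rank p n Ms =
     (if Ms = [] then n
      else Min {mat_rank p n (\<lambda>i j. (\<Sum>k<length Ms. lam k * (Ms ! k) i j) mod int p) | lam.
                  (\<forall>k<length Ms. 0 \<le> lam k \<and> lam k < int p) \<and> (\<forall>k. length Ms \<le> k \<longrightarrow> lam k = 0)
                  \<and> (\<exists>k<length Ms. lam k \<noteq> 0)})"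

definition beta_factor :: "nat \<Rightarrow> nat \<Rightarrow> (nat \<Rightarrow> int) list \<Rightarrow> (nat \<Rightarrow> nat \<Rightarrow> int) list
    \<Rightarrow> (nat \<Rightarrow> int) \<Rightarrow> int list \<times> int list" where
  "beta_factor p n rs Ms x = (map (\<lambda>r. dotp p n x r) rs, map (\<lambda>M. bilin p n M x x) Ms)"

definition atoms :: "nat \<Rightarrow> nat \<Rightarrow> (nat \<Rightarrow> int) list \<Rightarrow> (nat \<Rightarrow> nat \<Rightarrow> int) list
    \<Rightarrow> (nat \<Rightarrow> int) set set" where
  "atoms p n rs Ms =
     {{x \<in> Fpn p n. beta_factor p n rs Ms x = (a, b)} | a b.
        length a = length rs \<and> length b = length Ms \<and>
        set a \<subseteq> {0..<int p} \<and> set b \<subseteq> {0..<int p}}"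

definition Omega :: "nat \<Rightarrow> nat \<Rightarrow> (nat \<Rightarrow> int) set
    \<Rightarrow> ((nat \<Rightarrow> int) \<times> (nat \<Rightarrow> int) \<times> (nat \<Rightarrow> int) \<times> (nat \<Rightarrow> int)) set" where
  "Omega p n B = {(x, h1, h2, h3). x \<in> Fpn p n \<and> h1 \<in> Fpn p n \<and> h2 \<in> Fpn p n \<and> h3 \<in> Fpn p n \<and>
     (\<forall>w1 w2 w3 :: bool.
        vadd p (vadd p (vadd p x (if w1 then h1 else (\<lambda>_. 0))) (if w2 then h2 else (\<lambda>_. 0)))
               (if w3 then h3 else (\<lambda>_. 0)) \<in> B)}"

end

theory Submission
  imports Defs "HOL-Library.FuncSet"
begin

(*
  A point (x, h1, h2, h3) of F_p^(4n) lies in Omega_B iff each linear form r_k and each quadratic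
  form q_k(x) = x^T M_k x takes its prescribed value at the eight points x + w1 h1 + w2 h2 + w3 h3,
  w in {0,1}^3. Expanding in w, r_k contributes 4 and q_k contributes 7 coefficients, so Omega_B
  is cut out by 4l + 7q congruences. Detecting them with additive characters gives the main term
  p^(4n - 4l - 7q) plus an average of character sums of nontrivial combinations of the phases.
  Each combination is a quadratic polynomial on F_p^(4n) whose 4 x 4 block matrix has blocks of
  the form sum_k t_k M_k. If some t_k is nonzero, that block has rank at least R, the rank of the
  factor, and Weyl differencing bounds the sum by p^(4n - R/2); otherwise the combination is
  linear and nonzero, by independence of the r_k, so the sum vanishes. With C = 14 the error
  p^(4n - R/2) is at most eps p^(4n - 4l - 7q).
*)

type_synonym vec = "nat \<Rightarrow> int"

type_synonym mat = "nat \<Rightarrow> nat \<Rightarrow> int"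

section \<open>Additive characters modulo p\<close>

definition ep :: "nat \<Rightarrow> int \<Rightarrow> complex" where
  "ep p t = cis (2 * pi * of_int t / real p)"

lemma ep_add: "ep p (a + b) = ep p a * ep p b"
  by (simp add: ep_def cis_mult add_divide_distrib distrib_left)

lemma norm_ep [simp]: "norm (ep p a) = 1"
  by (simp add: ep_def)

lemma cnj_ep: "cnj (ep p a) = ep p (- a)"
  by (simp add: ep_def cis_cnj)

lemma ep_0 [simp]: "ep p 0 = 1"
  by (simp add: ep_def)

lemma ep_sum: "ep p (\<Sum>i\<in>A. f i) = (\<Prod>i\<in>A. ep p (f i))"
  by (induction A rule: infinite_finite_induct) (auto simp: ep_add)

lemma ep_power: "ep p u ^ k = ep p (int k * u)"
  by (simp add: ep_def DeMoivre mult_ac)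

lemma ep_cong:
  assumes "p > 0" "int p dvd a - b"
  shows "ep p a = ep p b"
proof -
  obtain k where a: "a = b + int p * k"
    using assms(2) by (metis dvd_def add_diff_cancel_left' add_diff_eq diff_add_cancel)
  have "2 * pi * of_int a / real p = 2 * pi * of_int b / real p + 2 * pi * of_int k"
    using assms(1) by (simp add: a field_simps)
  then show ?thesis
    by (simp add: ep_def cis_mult[symmetric])
qed

lemma ep_eq_1_imp_dvd:
  assumes "p > 0" "ep p u = 1"
  shows "int p dvd u"
proof -
  have "cos (2 * pi * of_int u / real p) = 1"
    using assms(2) unfolding ep_def by (metis cis.sel(1) one_complex.sel(1))
  then obtain m :: int where "2 * pi * of_int u / real p = of_int m * 2 * pi"
    by (auto simp: cos_one_2pi_int)
  then have "real_of_int u = of_int m * real p"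
    using assms(1) by (simp add: field_simps)
  then have "u = m * int p"
    by (metis of_int_eq_iff of_int_mult of_int_of_nat_eq)
  then show ?thesis by simp
qed

lemma sum_ep_residues:
  assumes "p > 0"
  shows "(\<Sum>a\<in>{0..<int p}. ep p (a * u)) = (if int p dvd u then of_nat p else 0)"
proof -
  have "(\<Sum>a\<in>{0..<int p}. ep p (a * u)) = (\<Sum>a<p. ep p u ^ a)"
  proof -
    have "{0..<int p} = int ` {..<p}"
      by (auto simp: image_iff intro!: bexI[of _ "nat _"])
    then show ?thesis by (simp add: sum.reindex ep_power)
  qed
  also have "\<dots> = (if int p dvd u then of_nat p else 0)"
  proof (cases "int p dvd u")
    case True
    then have "ep p u = 1" using ep_cong[OF assms, of u 0] by simp
    then show ?thesis using True by simp
  next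
    case False
    then have "ep p u \<noteq> 1" using ep_eq_1_imp_dvd[OF assms] by blast
    moreover have "ep p u ^ p = 1"
      using ep_cong[OF assms, of "int p * u" 0] by (simp add: ep_power)
    ultimately show ?thesis using False by (simp add: geometric_sum)
  qed
  finally show ?thesis .
qed

section \<open>Vectors and bilinear forms modulo p\<close>

definition vecs_on :: "nat \<Rightarrow> nat set \<Rightarrow> vec set" where
  "vecs_on p S = {x. (\<forall>i\<in>S. 0 \<le> x i \<and> x i < int p) \<and> (\<forall>i. i \<notin> S \<longrightarrow> x i = 0)}"

lemma Fpn_eq_vecs_on: "Fpn p n = vecs_on p {..<n}"
  by (auto simp: Fpn_def vecs_on_def)

lemma bij_betw_restrict_vecs_on:
  "bij_betw (\<lambda>x. restrict x S) (vecs_on p S) (PiE S (\<lambda>_. {0..<int p}))"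
  by (rule bij_betw_byWitness[where f' = "\<lambda>t i. if i \<in> S then t i else 0"])
    (auto simp: vecs_on_def PiE_def extensional_def fun_eq_iff)

lemma card_vecs_on: "finite S \<Longrightarrow> card (vecs_on p S) = p ^ card S"
  using bij_betw_same_card[OF bij_betw_restrict_vecs_on[of S p]] by (simp add: card_PiE)

lemma finite_vecs_on: "finite S \<Longrightarrow> finite (vecs_on p S)"
  using bij_betw_finite[OF bij_betw_restrict_vecs_on[of S p]] by (simp add: finite_PiE)

lemma sum_vecs_on_prod:
  fixes f :: "nat \<Rightarrow> int \<Rightarrow> 'c::comm_semiring_1"
  assumes "finite S"
  shows "(\<Sum>x\<in>vecs_on p S. \<Prod>i\<in>S. f i (x i)) = (\<Prod>i\<in>S. \<Sum>a\<in>{0..<int p}. f i a)"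
proof -
  have "(\<Sum>x\<in>vecs_on p S. \<Prod>i\<in>S. f i (x i)) = (\<Sum>x\<in>vecs_on p S. \<Prod>i\<in>S. f i (restrict x S i))"
    by (intro sum.cong prod.cong) auto
  also have "\<dots> = (\<Sum>t\<in>PiE S (\<lambda>_. {0..<int p}). \<Prod>i\<in>S. f i (t i))"
    using sum.reindex_bij_betw[OF bij_betw_restrict_vecs_on[of S p], of "\<lambda>t. \<Prod>i\<in>S. f i (t i)"] by simp
  also have "\<dots> = (\<Prod>i\<in>S. \<Sum>a\<in>{0..<int p}. f i a)"
    using assms by (simp add: prod_sum_PiE)
  finally show ?thesis .
qed

lemma vecs_on_eqI:
  assumes "x \<in> vecs_on p S" "y \<in> vecs_on p S" "\<And>k. k \<in> S \<Longrightarrow> int p dvd x k - y k"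
  shows "x = y"
proof
  fix k
  show "x k = y k"
  proof (cases "k \<in> S")
    case True
    then have "x k mod int p = y k mod int p"
      using assms(3) by (simp add: mod_eq_dvd_iff)
    then show ?thesis using assms(1,2) True by (simp add: vecs_on_def)
  next
    case False
    then show ?thesis using assms(1,2) by (simp add: vecs_on_def)
  qed
qed

lemma finite_Fpn [simp]: "finite (Fpn p n)"
  by (simp add: Fpn_eq_vecs_on finite_vecs_on)

lemma card_Fpn: "card (Fpn p n) = p ^ n"
  by (simp add: Fpn_eq_vecs_on card_vecs_on)

lemma vadd_Fpn: "p > 0 \<Longrightarrow> x \<in> Fpn p n \<Longrightarrow> y \<in> Fpn p n \<Longrightarrow> vadd p x y \<in> Fpn p n"
  by (simp add: Fpn_def vadd_def)

lemma inj_on_vadd_Fpn: "inj_on (vadd p w) (Fpn p n)"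
proof
  fix d d' assume d: "d \<in> Fpn p n" "d' \<in> Fpn p n" and eq: "vadd p w d = vadd p w d'"
  show "d = d'"
  proof
    fix i
    have "(w i + d i) mod int p = (w i + d' i) mod int p"
      using eq by (simp add: vadd_def fun_eq_iff)
    then have "d i mod int p = d' i mod int p"
      by (metis add_diff_cancel_left' mod_diff_left_eq)
    then show "d i = d' i"
      using d by (cases "i < n") (auto simp: Fpn_def)
  qed
qed

lemma sum_Fpn_translate:
  assumes "p > 0" "w \<in> Fpn p n"
  shows "(\<Sum>d\<in>Fpn p n. g (vadd p w d)) = (\<Sum>d\<in>Fpn p n. g d)"
proof -
  have "vadd p w ` Fpn p n \<subseteq> Fpn p n"
    using assms vadd_Fpn by blast
  moreover have "card (vadd p w ` Fpn p n) = card (Fpn p n)"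
    using inj_on_vadd_Fpn by (rule card_image)
  ultimately have "vadd p w ` Fpn p n = Fpn p n"
    by (simp add: card_subset_eq)
  then show ?thesis
    using sum.reindex[OF inj_on_vadd_Fpn, of g p w n] by (simp add: comp_def)
qed

definition idot :: "nat \<Rightarrow> vec \<Rightarrow> vec \<Rightarrow> int" where
  "idot n u v = (\<Sum>i<n. u i * v i)"

definition matvec :: "nat \<Rightarrow> mat \<Rightarrow> vec \<Rightarrow> vec" where
  "matvec n A v = (\<lambda>i. \<Sum>j<n. A i j * v j)"

definition bform :: "nat \<Rightarrow> mat \<Rightarrow> vec \<Rightarrow> vec \<Rightarrow> int" where
  "bform n A u v = (\<Sum>i<n. \<Sum>j<n. u i * A i j * v j)"

lemma bform_eq_idot_matvec: "bform n A u v = idot n u (matvec n A v)"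
  by (simp add: bform_def idot_def matvec_def sum_distrib_left mult.assoc)

lemma bform_commute:
  assumes "symmetric_mat n A"
  shows "bform n A u v = bform n A v u"
proof -
  have "bform n A u v = (\<Sum>j<n. \<Sum>i<n. u i * A i j * v j)"
    unfolding bform_def by (rule sum.swap)
  also have "\<dots> = bform n A v u"
    using assms by (auto simp: bform_def symmetric_mat_def mult_ac intro!: sum.cong)
  finally show ?thesis .
qed

lemma idot_add_left: "idot n (\<lambda>i. u i + v i) w = idot n u w + idot n v w"
  by (simp add: idot_def algebra_simps sum.distrib)

lemma bform_add_left: "bform n A (\<lambda>i. u i + v i) w = bform n A u w + bform n A v w"
  by (simp add: bform_def algebra_simps sum.distrib)

lemma bform_add_right: "bform n A w (\<lambda>i. u i + v i) = bform n A w u + bform n A w v"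
  by (simp add: bform_def algebra_simps sum.distrib)

lemma bform_scale_left: "bform n M (\<lambda>i. c * u i) w = c * bform n M u w"
  by (simp add: bform_def algebra_simps sum_distrib_left)

lemma bform_scale_right: "bform n M w (\<lambda>i. c * u i) = c * bform n M w u"
  by (simp add: bform_def algebra_simps sum_distrib_left)

lemma bform_diag_add:
  assumes "symmetric_mat n A"
  shows "bform n A (\<lambda>i. u i + v i) (\<lambda>i. u i + v i) = bform n A u u + bform n A v v + 2 * idot n u (matvec n A v)"
  using bform_commute[OF assms, of v u]
  by (simp add: bform_add_left bform_add_right bform_eq_idot_matvec)

lemma idot_sum_right: "idot n x (\<lambda>i. \<Sum>k\<in>K. c k * v k i) = (\<Sum>k\<in>K. c k * idot n x (v k))"
  by (simp add: idot_def sum_distrib_left mult_ac sum.swap[of _ K])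

lemma bform_sum_mat: "bform n (\<lambda>i j. \<Sum>k\<in>K. c k * M k i j) u v = (\<Sum>k\<in>K. c k * bform n (M k) u v)"
proof -
  have "bform n (\<lambda>i j. \<Sum>k\<in>K. c k * M k i j) u v = (\<Sum>i<n. \<Sum>k\<in>K. \<Sum>j<n. c k * (u i * M k i j * v j))"
    by (simp add: bform_def sum_distrib_left sum_distrib_right mult_ac sum.swap[of _ K "{..<n}"])
  also have "\<dots> = (\<Sum>k\<in>K. c k * bform n (M k) u v)"
    by (subst sum.swap) (simp add: bform_def sum_distrib_left)
  finally show ?thesis .
qed

lemma mod_sum_cong:
  "(\<And>i. i \<in> A \<Longrightarrow> f i mod m = g i mod m) \<Longrightarrow> sum f A mod (m::int) = sum g A mod m"
  by (metis (no_types, lifting) mod_sum_eq sum.cong)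

lemma mod_eq_iff_dvd_diff:
  assumes "0 \<le> a" "a < m"
  shows "s mod m = a \<longleftrightarrow> m dvd s - (a::int)"
proof -
  have "a mod m = a" using assms by simp
  then show ?thesis by (metis mod_eq_dvd_iff)
qed

lemma mod_eq_imp_dvd_diff_iff: "s mod m = s' mod m \<Longrightarrow> (m dvd s - a) \<longleftrightarrow> (m dvd s' - (a::int))"
  by (simp add: mod_eq_dvd_iff[symmetric] mod_diff_left_eq[symmetric, of s] mod_diff_left_eq[symmetric, of s'])

lemma idot_mod_cong:
  "(\<And>i. i < n \<Longrightarrow> x i mod m = x' i mod m) \<Longrightarrow> idot n x u mod m = idot n x' u mod (m::int)"
  unfolding idot_def by (rule mod_sum_cong) (auto intro: mod_mult_cong)

lemma bform_mod_cong:
  "(\<And>i. i < n \<Longrightarrow> x i mod m = x' i mod m) \<Longrightarrow> (\<And>i. i < n \<Longrightarrow> y i mod m = y' i mod m) \<Longrightarrow>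
   bform n A x y mod m = bform n A x' y' mod (m::int)"
  unfolding bform_def by (intro mod_sum_cong) (auto intro!: mod_mult_cong)

lemma sum_ep_idot:
  assumes "p > 0"
  shows "(\<Sum>x\<in>Fpn p n. ep p (idot n x u)) = (if \<forall>i<n. int p dvd u i then of_nat p ^ n else 0)"
proof -
  have "(\<Sum>x\<in>Fpn p n. ep p (idot n x u)) = (\<Sum>x\<in>vecs_on p {..<n}. \<Prod>i<n. ep p (x i * u i))"
    by (simp add: Fpn_eq_vecs_on idot_def ep_sum)
  also have "\<dots> = (\<Prod>i<n. \<Sum>a\<in>{0..<int p}. ep p (a * u i))"
    by (rule sum_vecs_on_prod) simp
  also have "\<dots> = (\<Prod>i<n. if int p dvd u i then of_nat p else 0)"
    using sum_ep_residues[OF assms] by simp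
  also have "\<dots> = (if \<forall>i<n. int p dvd u i then of_nat p ^ n else 0)"
    by auto
  finally show ?thesis .
qed

section \<open>Counting solutions of congruences\<close>

lemma of_bool_Ball: "finite J \<Longrightarrow> (of_bool (\<forall>j\<in>J. P j) :: 'a::comm_semiring_1) = (\<Prod>j\<in>J. of_bool (P j))"
  by (induction J rule: finite_induct) (auto intro: prod_zero[OF _ bexI])

lemma card_solutions_eq_char_sum:
  fixes \<phi> :: "'j \<Rightarrow> 'z \<Rightarrow> int"
  assumes p: "p > 0" and Z: "finite Z" and J: "finite J"
  shows "(of_nat (card {z\<in>Z. \<forall>j\<in>J. int p dvd \<phi> j z - c j}) :: complex) =
    (\<Sum>t\<in>PiE J (\<lambda>_. {0..<int p}). \<Sum>z\<in>Z. ep p (\<Sum>j\<in>J. t j * (\<phi> j z - c j))) / of_nat p ^ card J"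
proof -
  have indicator: "(of_bool (int p dvd a) :: complex) = (\<Sum>s\<in>{0..<int p}. ep p (s * a)) / of_nat p" for a
    using sum_ep_residues[OF p, of a] p by simp
  have "(of_nat (card {z\<in>Z. \<forall>j\<in>J. int p dvd \<phi> j z - c j}) :: complex)
      = (\<Sum>z\<in>Z. \<Prod>j\<in>J. of_bool (int p dvd \<phi> j z - c j))"
  proof -
    have "{z\<in>Z. \<forall>j\<in>J. int p dvd \<phi> j z - c j} = Z \<inter> {z. \<forall>j\<in>J. int p dvd \<phi> j z - c j}"
      by blast
    then show ?thesis using Z J by (simp add: of_bool_Ball[symmetric])
  qed
  also have "\<dots> = (\<Sum>z\<in>Z. \<Prod>j\<in>J. (\<Sum>s\<in>{0..<int p}. ep p (s * (\<phi> j z - c j))) / of_nat p)"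
    by (simp only: indicator)
  also have "\<dots> = (\<Sum>z\<in>Z. (\<Sum>t\<in>PiE J (\<lambda>_. {0..<int p}). \<Prod>j\<in>J. ep p (t j * (\<phi> j z - c j))) / of_nat p ^ card J)"
    using J by (simp add: prod_dividef prod_sum_PiE)
  also have "\<dots> = (\<Sum>t\<in>PiE J (\<lambda>_. {0..<int p}). \<Sum>z\<in>Z. ep p (\<Sum>j\<in>J. t j * (\<phi> j z - c j))) / of_nat p ^ card J"
    by (simp add: ep_sum sum_divide_distrib[symmetric] sum.swap[of _ Z])
  finally show ?thesis .
qed

lemma norm_char_sum_shift:
  "norm (\<Sum>z\<in>Z. ep p (\<Sum>j\<in>J. t j * (\<phi> j z - c j))) = norm (\<Sum>z\<in>Z. ep p (\<Sum>j\<in>J. t j * \<phi> j z))"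
proof -
  have "(\<Sum>z\<in>Z. ep p (\<Sum>j\<in>J. t j * (\<phi> j z - c j)))
      = ep p (- (\<Sum>j\<in>J. t j * c j)) * (\<Sum>z\<in>Z. ep p (\<Sum>j\<in>J. t j * \<phi> j z))"
    by (simp add: sum_distrib_left ep_add[symmetric] right_diff_distrib sum_subtractf)
  then show ?thesis by (simp add: norm_mult)
qed

lemma card_solutions_deviation_le:
  fixes \<phi> :: "'j \<Rightarrow> 'z \<Rightarrow> int"
  assumes p: "p > 0" and Z: "finite Z" and J: "finite J" and "X \<ge> 0"
    and char_sum_le: "\<And>t. t \<in> PiE J (\<lambda>_. {0..<int p}) \<Longrightarrow> (\<exists>j\<in>J. t j \<noteq> 0) \<Longrightarrow>
        norm (\<Sum>z\<in>Z. ep p (\<Sum>j\<in>J. t j * \<phi> j z)) \<le> X"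
  shows "\<bar>real (card {z\<in>Z. \<forall>j\<in>J. int p dvd \<phi> j z - c j}) - real (card Z) / real p ^ card J\<bar> \<le> X"
proof -
  define P where "P = PiE J (\<lambda>_. {0..<int p})"
  define t0 where "t0 = restrict (\<lambda>_. 0::int) J"
  define S where "S t = (\<Sum>z\<in>Z. ep p (\<Sum>j\<in>J. t j * (\<phi> j z - c j)))" for t
  have "finite P" "t0 \<in> P" using J p by (auto simp: P_def t0_def finite_PiE)
  have "norm (S t) \<le> X" if t: "t \<in> P - {t0}" for t
  proof -
    have "\<exists>j\<in>J. t j \<noteq> 0"
    proof (rule ccontr)
      assume "\<not> (\<exists>j\<in>J. t j \<noteq> 0)"
      then have "t = t0" using t by (auto simp: P_def t0_def PiE_def extensional_def fun_eq_iff)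
      then show False using t by simp
    qed
    then show ?thesis
      using char_sum_le t by (simp add: S_def P_def norm_char_sum_shift)
  qed
  then have "norm (\<Sum>t\<in>P - {t0}. S t) \<le> real (card (P - {t0})) * X"
    using sum_bounded_above[of "P - {t0}" "\<lambda>t. norm (S t)" X] norm_sum[of S "P - {t0}"] by simp
  also have "\<dots> \<le> real p ^ card J * X"
    using \<open>finite P\<close> J \<open>X \<ge> 0\<close> card_Diff1_le[of P t0]
    by (intro mult_right_mono) (simp_all add: P_def card_PiE flip: of_nat_power)
  finally have sum_le: "norm (\<Sum>t\<in>P - {t0}. S t) / real p ^ card J \<le> X"
    using p by (simp add: divide_le_eq mult.commute)
  have "(of_nat (card {z\<in>Z. \<forall>j\<in>J. int p dvd \<phi> j z - c j}) :: complex)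
      = (S t0 + (\<Sum>t\<in>P - {t0}. S t)) / of_nat p ^ card J"
    using card_solutions_eq_char_sum[OF p Z J] sum.remove[OF \<open>finite P\<close> \<open>t0 \<in> P\<close>, of S]
    by (simp add: P_def S_def)
  also have "S t0 = of_nat (card Z)"
    by (simp add: S_def t0_def)
  finally have "complex_of_real (real (card {z\<in>Z. \<forall>j\<in>J. int p dvd \<phi> j z - c j}) - real (card Z) / real p ^ card J)
      = (\<Sum>t\<in>P - {t0}. S t) / of_nat p ^ card J"
    by (simp add: add_divide_distrib)
  then have "norm (complex_of_real (real (card {z\<in>Z. \<forall>j\<in>J. int p dvd \<phi> j z - c j}) - real (card Z) / real p ^ card J))
      = norm ((\<Sum>t\<in>P - {t0}. S t) / of_nat p ^ card J)"
    by (rule arg_cong)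
  then show ?thesis using sum_le by (simp only: norm_of_real norm_divide norm_power norm_of_nat)
qed

section \<open>Rank\<close>

lemma finite_mat_rank_candidates: "finite {card S | S. S \<subseteq> {..<n} \<and> lin_indep_Fp p n S v}"
  by (rule finite_subset[of _ "card ` Pow {..<n}"]) auto

lemma card_le_mat_rank:
  assumes "S \<subseteq> {..<n}" "lin_indep_Fp p n S (\<lambda>k i. M i k)"
  shows "card S \<le> mat_rank p n M"
  unfolding mat_rank_def using assms by (intro Max_ge[OF finite_mat_rank_candidates]) blast

lemma obtain_mat_rank_basis:
  obtains S where "S \<subseteq> {..<n}" "lin_indep_Fp p n S (\<lambda>k i. M i k)" "card S = mat_rank p n M"
proof -
  let ?C = "{card S | S. S \<subseteq> {..<n} \<and> lin_indep_Fp p n S (\<lambda>k i. M i k)}"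
  have "card {} \<in> ?C"
    by (auto simp: lin_indep_Fp_def intro!: exI[of _ "{}"])
  then have "mat_rank p n M \<in> ?C"
    unfolding mat_rank_def using finite_mat_rank_candidates by (intro Max_in) auto
  then show ?thesis using that by auto
qed

lemma mat_rank_le: "mat_rank p n M \<le> n"
proof -
  obtain S where "S \<subseteq> {..<n}" "card S = mat_rank p n M"
    by (rule obtain_mat_rank_basis)
  then show ?thesis using card_mono[of "{..<n}" S] by simp
qed

lemma mat_rank_submatrix_le:
  assumes sub: "\<And>i j. i < n \<Longrightarrow> j < n \<Longrightarrow> M' i j = M (f i) (g j)"
    and f: "\<And>i. i < n \<Longrightarrow> f i < m" and g: "\<And>j. j < n \<Longrightarrow> g j < m" and "inj_on g {..<n}"
  shows "mat_rank p n M' \<le> mat_rank p m M"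
proof -
  obtain S where S: "S \<subseteq> {..<n}" and indep: "lin_indep_Fp p n S (\<lambda>k i. M' i k)"
    and card_S: "card S = mat_rank p n M'"
    by (rule obtain_mat_rank_basis)
  have inj: "inj_on g S" using \<open>inj_on g {..<n}\<close> S by (rule inj_on_subset)
  have "lin_indep_Fp p m (g ` S) (\<lambda>k i. M i k)"
    unfolding lin_indep_Fp_def
  proof (intro allI impI ballI, elim conjE)
    fix c k assume c: "\<forall>k\<in>g ` S. 0 \<le> c k \<and> c k < int p"
      and dep: "\<forall>i<m. (\<Sum>k\<in>g ` S. c k * M i k) mod int p = 0" and k: "k \<in> g ` S"
    have "(\<Sum>k\<in>S. c (g k) * M' i k) mod int p = 0" if "i < n" for i
    proof -
      have "(\<Sum>k\<in>S. c (g k) * M' i k) = (\<Sum>k\<in>g ` S. c k * M (f i) k)"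
        using S sub that by (simp add: sum.reindex[OF inj] subset_iff)
      then show ?thesis using dep f that by simp
    qed
    then have "\<forall>k\<in>S. c (g k) = 0"
      using indep c unfolding lin_indep_Fp_def by (elim allE[of _ "c \<circ> g"]) auto
    then show "c k = 0" using k by blast
  qed
  moreover have "g ` S \<subseteq> {..<m}" using S g by auto
  ultimately have "card (g ` S) \<le> mat_rank p m M"
    by (rule card_le_mat_rank[rotated])
  then show ?thesis using card_S by (simp add: card_image[OF inj])
qed

lemma quad_rank_le_mat_rank:
  assumes "\<forall>k<length Ms. 0 \<le> lam k \<and> lam k < int p" "\<exists>k<length Ms. lam k \<noteq> 0"
  shows "quad_rank p n Ms \<le> mat_rank p n (\<lambda>i j. (\<Sum>k<length Ms. lam k * (Ms ! k) i j) mod int p)"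
proof -
  define lam' where "lam' k = (if k < length Ms then lam k else 0)" for k
  let ?R = "\<lambda>lam. mat_rank p n (\<lambda>i j. (\<Sum>k<length Ms. lam k * (Ms ! k) i j) mod int p)"
  let ?C = "{?R lam | lam. (\<forall>k<length Ms. 0 \<le> lam k \<and> lam k < int p) \<and> (\<forall>k. length Ms \<le> k \<longrightarrow> lam k = 0)
                  \<and> (\<exists>k<length Ms. lam k \<noteq> 0)}"
  have "(\<forall>k<length Ms. 0 \<le> lam' k \<and> lam' k < int p) \<and> (\<forall>k. length Ms \<le> k \<longrightarrow> lam' k = 0)
      \<and> (\<exists>k<length Ms. lam' k \<noteq> 0)"
    using assms by (auto simp: lam'_def)
  then have "?R lam' \<in> ?C" by blast
  moreover have "finite ?C"
    by (rule finite_subset[of _ "{..n}"]) (auto simp: mat_rank_le)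
  ultimately have "Min ?C \<le> ?R lam'"
    by (intro Min_le)
  moreover have "?R lam' = ?R lam"
    by (simp add: lam'_def)
  moreover have "Ms \<noteq> []" using assms(2) by auto
  ultimately show ?thesis
    unfolding quad_rank_def by simp
qed

lemma vecs_on_eq_if_matvec_cong:
  assumes p: "p > 0" and S: "S \<subseteq> {..<m}" and indep: "lin_indep_Fp p m S (\<lambda>k i. A i k mod int p)"
    and u: "u \<in> vecs_on p S" "u' \<in> vecs_on p S"
    and cong: "\<And>i. i < m \<Longrightarrow> int p dvd matvec m A u' i - matvec m A u i"
  shows "u' = u"
proof -
  define e where "e k = (u' k - u k) mod int p" for k
  have "(\<forall>k\<in>S. 0 \<le> e k \<and> e k < int p) \<and> (\<forall>i<m. (\<Sum>k\<in>S. e k * (A i k mod int p)) mod int p = 0)"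
  proof (intro conjI allI impI ballI)
    fix k show "0 \<le> e k" "e k < int p" using p by (simp_all add: e_def)
  next
    fix i assume "i < m"
    have "(\<Sum>k\<in>S. e k * (A i k mod int p)) mod int p = (\<Sum>k\<in>S. A i k * (u' k - u k)) mod int p"
      by (rule mod_sum_cong) (simp add: e_def mod_mult_eq mult.commute)
    also have "(\<Sum>k\<in>S. A i k * (u' k - u k)) = (\<Sum>k<m. A i k * (u' k - u k))"
      using S u by (intro sum.mono_neutral_left) (auto simp: vecs_on_def)
    also have "\<dots> = matvec m A u' i - matvec m A u i"
      by (simp add: matvec_def sum_subtractf right_diff_distrib)
    also have "\<dots> mod int p = 0"
      using cong \<open>i < m\<close> by simp
    finally show "(\<Sum>k\<in>S. e k * (A i k mod int p)) mod int p = 0" .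
  qed
  then have "\<forall>k\<in>S. e k = 0"
    using indep unfolding lin_indep_Fp_def by blast
  then show "u' = u"
    using u by (intro vecs_on_eqI[of _ p S]) (auto simp: e_def dvd_eq_mod_eq_0)
qed

(* The columns S of A being independent mod p, (d, u) |-> d + u is injective on
   ker A times the vectors supported on S. *)
lemma card_kernel_mult_le:
  assumes p: "p > 0" and S: "S \<subseteq> {..<m}" and indep: "lin_indep_Fp p m S (\<lambda>k i. A i k mod int p)"
  shows "card {d\<in>Fpn p m. \<forall>i<m. int p dvd matvec m A d i} * p ^ card S \<le> p ^ m"
proof -
  define T where "T = {d\<in>Fpn p m. \<forall>i<m. int p dvd matvec m A d i}"
  define W where "W = vecs_on p S"
  have "inj_on (\<lambda>(d, u). vadd p d u) (T \<times> W)"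
  proof (rule inj_onI, clarify)
    fix d u d' u' assume d: "d \<in> T" "d' \<in> T" and u: "u \<in> W" "u' \<in> W"
      and eq: "vadd p d u = vadd p d' u'"
    have cong: "int p dvd (u' k - u k) - (d k - d' k)" for k
    proof -
      have "(d' k + u' k) mod int p = (d k + u k) mod int p"
        using eq by (simp add: vadd_def fun_eq_iff)
      then show ?thesis by (simp add: mod_eq_dvd_iff algebra_simps)
    qed
    have "u' = u"
    proof (rule vecs_on_eq_if_matvec_cong[OF p S indep])
      fix i assume "i < m"
      have "matvec m A u' i - matvec m A u i
          = (\<Sum>k<m. A i k * ((u' k - u k) - (d k - d' k))) + (matvec m A d i - matvec m A d' i)"
        by (simp add: matvec_def sum_subtractf sum.distrib algebra_simps)
      moreover have "int p dvd (\<Sum>k<m. A i k * ((u' k - u k) - (d k - d' k)))"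
        using cong by (intro dvd_sum dvd_mult)
      moreover have "int p dvd matvec m A d i - matvec m A d' i"
        using d \<open>i < m\<close> by (auto simp: T_def)
      ultimately show "int p dvd matvec m A u' i - matvec m A u i"
        by simp
    qed (use u in \<open>simp_all add: W_def\<close>)
    moreover have "d' = d"
      using d cong \<open>u' = u\<close> by (intro vecs_on_eqI[of _ p "{..<m}"]) (auto simp: T_def Fpn_eq_vecs_on)
    ultimately show "d = d' \<and> u = u'" by simp
  qed
  moreover have "(\<lambda>(d, u). vadd p d u) ` (T \<times> W) \<subseteq> Fpn p m"
    using p S by (auto simp: T_def W_def Fpn_eq_vecs_on vecs_on_def vadd_def subset_iff)
  ultimately have "card (T \<times> W) \<le> card (Fpn p m)"
    by (intro card_inj_on_le) simp_all
  moreover have "finite S" using S finite_subset by blast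
  ultimately show ?thesis
    by (simp add: card_cartesian_product W_def card_vecs_on card_Fpn T_def)
qed

section \<open>Quadratic character sums\<close>

lemma ep_quadratic_translate:
  assumes p: "p > 0" and sym: "symmetric_mat m A"
  shows "ep p (idot m (vadd p w d) b + bform m A (vadd p w d) (vadd p w d)) * ep p (- (idot m w b + bform m A w w))
    = ep p (idot m d b + bform m A d d) * ep p (idot m w (\<lambda>i. 2 * matvec m A d i))"
proof -
  define \<Phi> where "\<Phi> x = idot m x b + bform m A x x" for x
  have "\<Phi> (vadd p w d) mod int p = \<Phi> (\<lambda>i. w i + d i) mod int p"
    unfolding \<Phi>_def vadd_def
    by (intro mod_add_cong idot_mod_cong bform_mod_cong) simp_all
  moreover have "\<Phi> (\<lambda>i. w i + d i) = \<Phi> w + (\<Phi> d + idot m w (\<lambda>i. 2 * matvec m A d i))"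
    by (simp add: \<Phi>_def idot_add_left bform_diag_add[OF sym]) (simp add: idot_def sum_distrib_left mult_ac)
  ultimately have "int p dvd (\<Phi> (vadd p w d) + - \<Phi> w) - (\<Phi> d + idot m w (\<lambda>i. 2 * matvec m A d i))"
    by (simp add: mod_eq_dvd_iff diff_diff_eq)
  then show ?thesis
    unfolding \<Phi>_def[symmetric] by (simp only: ep_add[symmetric] ep_cong[OF p])
qed

(* Weyl differencing: substituting x = w + d turns the squared modulus into a sum over d of
   the character of the phase at d times a linear character sum in w, which vanishes unless
   2 A d = 0 mod p. *)
lemma quadratic_char_sum_norm_square_le:
  assumes p: "p > 0" and sym: "symmetric_mat m A"
  shows "(norm (\<Sum>x\<in>Fpn p m. ep p (idot m x b + bform m A x x)))\<^sup>2
     \<le> real p ^ m * real (card {d\<in>Fpn p m. \<forall>i<m. int p dvd 2 * matvec m A d i})"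
proof -
  define \<Phi> where "\<Phi> x = idot m x b + bform m A x x" for x
  define K where "K = {d\<in>Fpn p m. \<forall>i<m. int p dvd 2 * matvec m A d i}"
  define S where "S = (\<Sum>x\<in>Fpn p m. ep p (\<Phi> x))"
  have \<Phi>_vadd: "ep p (\<Phi> (vadd p w d)) * ep p (- \<Phi> w) = ep p (\<Phi> d) * ep p (idot m w (\<lambda>i. 2 * matvec m A d i))"
    for w d
    unfolding \<Phi>_def by (rule ep_quadratic_translate[OF p sym])
  have "S * cnj S = (\<Sum>x\<in>Fpn p m. \<Sum>w\<in>Fpn p m. ep p (\<Phi> x) * ep p (- \<Phi> w))"
    unfolding S_def by (simp add: cnj_ep sum_product)
  also have "\<dots> = (\<Sum>w\<in>Fpn p m. \<Sum>x\<in>Fpn p m. ep p (\<Phi> x) * ep p (- \<Phi> w))"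
    by (rule sum.swap)
  also have "\<dots> = (\<Sum>w\<in>Fpn p m. \<Sum>d\<in>Fpn p m. ep p (\<Phi> (vadd p w d)) * ep p (- \<Phi> w))"
    by (intro sum.cong refl sum_Fpn_translate[OF p, symmetric])
  also have "\<dots> = (\<Sum>d\<in>Fpn p m. ep p (\<Phi> d) * (\<Sum>w\<in>Fpn p m. ep p (idot m w (\<lambda>i. 2 * matvec m A d i))))"
    unfolding \<Phi>_vadd by (subst sum.swap) (simp add: sum_distrib_left)
  also have "\<dots> = (\<Sum>d\<in>Fpn p m. ep p (\<Phi> d) * (if d \<in> K then of_nat p ^ m else 0))"
    by (intro sum.cong refl) (simp add: sum_ep_idot[OF p] K_def)
  finally have "norm (S * cnj S) \<le> (\<Sum>d\<in>Fpn p m. norm (ep p (\<Phi> d) * (if d \<in> K then of_nat p ^ m else 0)))"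
    by (simp only: norm_sum)
  also have "\<dots> = (\<Sum>d\<in>Fpn p m. if d \<in> K then real p ^ m else 0)"
    by (intro sum.cong refl) (simp add: norm_mult norm_power)
  also have "\<dots> = real p ^ m * real (card K)"
    by (simp add: sum.If_cases K_def Int_def)
  finally have "norm (S * cnj S) \<le> real p ^ m * real (card K)" .
  moreover have "norm (S * cnj S) = (norm S)\<^sup>2"
    by (simp add: norm_mult power2_eq_square)
  ultimately show ?thesis
    unfolding S_def K_def \<Phi>_def by simp
qed

lemma odd_prime_dvd_2_mult_iff:
  assumes "prime p" "odd p"
  shows "int p dvd 2 * x \<longleftrightarrow> int p dvd x"
proof -
  have "\<not> p dvd 2"
    using assms primes_dvd_imp_eq[OF assms(1) two_is_prime_nat] by auto
  then have "\<not> int p dvd 2"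
    by (metis int_dvd_int_iff of_nat_numeral)
  then show ?thesis
    using assms(1) by (simp add: prime_dvd_mult_iff)
qed

lemma quadratic_char_sum_norm_le:
  assumes p: "prime p" "odd p" and sym: "symmetric_mat m A"
  shows "norm (\<Sum>x\<in>Fpn p m. ep p (idot m x b + bform m A x x))
    \<le> real p powr (real m - real (mat_rank p m (\<lambda>i j. A i j mod int p)) / 2)"
proof -
  define r where "r = mat_rank p m (\<lambda>i j. A i j mod int p)"
  define K where "K = {d\<in>Fpn p m. \<forall>i<m. int p dvd matvec m A d i}"
  have p0: "p > 0" using p prime_gt_0_nat by blast
  obtain S where S: "S \<subseteq> {..<m}" and indep: "lin_indep_Fp p m S (\<lambda>k i. A i k mod int p)"
    and "card S = r"
    unfolding r_def by (rule obtain_mat_rank_basis)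
  then have "card K * p ^ r \<le> p ^ m"
    using card_kernel_mult_le[OF p0 S indep] by (simp add: K_def)
  then have "real (card K) \<le> real p ^ m / real p ^ r"
    using p0 by (simp add: pos_le_divide_eq flip: of_nat_mult of_nat_power)
  then have "real p ^ m * real (card K) \<le> real p ^ m * (real p ^ m / real p ^ r)"
    by (rule mult_left_mono) simp
  also have "\<dots> = real p powr (real m + real m - real r)"
    using p0 by (simp only: powr_diff powr_add powr_realpow of_nat_0_less_iff times_divide_eq_right)
  also have "\<dots> = (real p powr (real m - real r / 2))\<^sup>2"
    by (simp add: power2_eq_square powr_add[symmetric])
  finally have K_le: "real p ^ m * real (card K) \<le> (real p powr (real m - real r / 2))\<^sup>2" .
  have "{d\<in>Fpn p m. \<forall>i<m. int p dvd 2 * matvec m A d i} = K"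
    unfolding K_def odd_prime_dvd_2_mult_iff[OF p] ..
  then have "(norm (\<Sum>x\<in>Fpn p m. ep p (idot m x b + bform m A x x)))\<^sup>2 \<le> real p ^ m * real (card K)"
    using quadratic_char_sum_norm_square_le[OF p0 sym, of b] by (simp only:)
  then show ?thesis
    unfolding r_def[symmetric] by (rule power2_le_imp_le[OF order_trans[OF _ K_le]]) simp
qed

section \<open>Block vectors and block matrices\<close>

lemma sum_lessThan_mult:
  fixes f :: "nat \<Rightarrow> 'a::comm_monoid_add"
  shows "(\<Sum>i<k * n. f i) = (\<Sum>c<k. \<Sum>j<n. f (c * n + j))"
proof -
  have "(\<Sum>i<k * n. f i) = (\<Sum>c<k. \<Sum>i\<in>{c * n..<c * n + n}. f i)"
    using sum.nat_group[where g = f and k = n and n = k] by (simp add: mult.commute)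
  also have "\<dots> = (\<Sum>c<k. \<Sum>j<n. f (c * n + j))"
    by (simp add: sum.atLeastLessThan_shift_0 atLeast0LessThan comp_def)
  finally show ?thesis .
qed

lemma block_index_less: "(r::nat) < k \<Longrightarrow> i < n \<Longrightarrow> r * n + i < k * n"
proof -
  assume "r < k" "i < n"
  then have "r * n + i < Suc r * n" by simp
  also have "\<dots> \<le> k * n" using \<open>r < k\<close> by (intro mult_le_mono1) simp
  finally show ?thesis .
qed

(* A vector of length k * n is read as k blocks of length n: coordinate c * n + j is
   entry j of block c. *)
definition slice :: "nat \<Rightarrow> vec \<Rightarrow> nat \<Rightarrow> vec" where
  "slice n y c = (\<lambda>j. if j < n then y (c * n + j) else 0)"

definition blockvec :: "nat \<Rightarrow> (nat \<Rightarrow> vec) \<Rightarrow> vec" where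
  "blockvec n U = (\<lambda>i. U (i div n) (i mod n))"

definition blockmat :: "nat \<Rightarrow> (nat \<Rightarrow> nat \<Rightarrow> mat) \<Rightarrow> mat" where
  "blockmat n N = (\<lambda>i j. N (i div n) (j div n) (i mod n) (j mod n))"

lemma slice_Fpn: "y \<in> Fpn p (k * n) \<Longrightarrow> c < k \<Longrightarrow> slice n y c \<in> Fpn p n"
  by (simp add: Fpn_def slice_def block_index_less)

lemma slice_div_mod: "n > 0 \<Longrightarrow> slice n y (i div n) (i mod n) = y i"
  by (simp add: slice_def)

lemma idot_blockvec: "idot (k * n) y (blockvec n U) = (\<Sum>c<k. idot n (slice n y c) (U c))"
  by (cases "n = 0") (simp_all add: idot_def sum_lessThan_mult blockvec_def slice_def)

lemma bform_blockmat:
  "bform (k * n) (blockmat n N) y z = (\<Sum>r<k. \<Sum>c<k. bform n (N r c) (slice n y r) (slice n z c))"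
proof (cases "n = 0")
  case False
  then show ?thesis
    by (simp add: bform_def sum_lessThan_mult blockmat_def slice_def sum.swap[of _ "{..<n}" "{..<k}"])
qed (simp add: bform_def)

lemma symmetric_blockmat:
  assumes "\<And>r c i j. r < k \<Longrightarrow> c < k \<Longrightarrow> i < n \<Longrightarrow> j < n \<Longrightarrow> N r c i j = N c r j i"
  shows "symmetric_mat (k * n) (blockmat n N)"
  unfolding symmetric_mat_def blockmat_def
proof (intro allI impI)
  fix i j assume "i < k * n" "j < k * n"
  then have "n > 0" by (cases "n = 0") simp_all
  then show "N (i div n) (j div n) (i mod n) (j mod n) = N (j div n) (i div n) (j mod n) (i mod n)"
    using \<open>i < k * n\<close> \<open>j < k * n\<close> by (intro assms) (simp_all add: less_mult_imp_div_less)
qed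

lemma mat_rank_block_le:
  assumes "r < k" "c < k"
  shows "mat_rank p n (\<lambda>i j. N r c i j mod int p) \<le> mat_rank p (k * n) (\<lambda>i j. blockmat n N i j mod int p)"
proof (rule mat_rank_submatrix_le[where f = "\<lambda>i. r * n + i" and g = "\<lambda>j. c * n + j"])
  show "r * n + i < k * n" "c * n + i < k * n" if "i < n" for i
    using assms that by (simp_all add: block_index_less)
qed (auto simp: blockmat_def inj_on_def)

section \<open>Omega as the solution set of the phase congruences\<close>

lemma dvd_cube_affine_iff:
  fixes A B1 B2 B3 a m :: int
  shows "(\<forall>w1 w2 w3. m dvd A + of_bool w1 * B1 + of_bool w2 * B2 + of_bool w3 * B3 - a)
     \<longleftrightarrow> m dvd A - a \<and> m dvd B1 \<and> m dvd B2 \<and> m dvd B3"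
proof
  assume H: "\<forall>w1 w2 w3. m dvd A + of_bool w1 * B1 + of_bool w2 * B2 + of_bool w3 * B3 - a"
  have "m dvd A - a" "m dvd A + B1 - a" "m dvd A + B2 - a" "m dvd A + B3 - a"
    using H[rule_format, of False False False] H[rule_format, of True False False]
      H[rule_format, of False True False] H[rule_format, of False False True] by simp_all
  then have "m dvd A - a" "m dvd (A + B1 - a) - (A - a)" "m dvd (A + B2 - a) - (A - a)"
    "m dvd (A + B3 - a) - (A - a)"
    by (simp_all only: dvd_diff)
  then show "m dvd A - a \<and> m dvd B1 \<and> m dvd B2 \<and> m dvd B3" by simp
next
  assume "m dvd A - a \<and> m dvd B1 \<and> m dvd B2 \<and> m dvd B3"
  then have "m dvd (A - a) + of_bool w1 * B1 + of_bool w2 * B2 + of_bool w3 * B3" for w1 w2 w3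
    by (intro dvd_add dvd_mult) auto
  then show "\<forall>w1 w2 w3. m dvd A + of_bool w1 * B1 + of_bool w2 * B2 + of_bool w3 * B3 - a"
    by (simp add: algebra_simps)
qed

lemma dvd_cube_quadratic_iff:
  fixes A B1 B2 B3 C12 C13 C23 b m :: int
  shows "(\<forall>w1 w2 w3. m dvd A + of_bool w1 * B1 + of_bool w2 * B2 + of_bool w3 * B3
            + of_bool (w1 \<and> w2) * C12 + of_bool (w1 \<and> w3) * C13 + of_bool (w2 \<and> w3) * C23 - b)
     \<longleftrightarrow> m dvd A - b \<and> m dvd B1 \<and> m dvd B2 \<and> m dvd B3 \<and> m dvd C12 \<and> m dvd C13 \<and> m dvd C23"
proof
  assume H: "\<forall>w1 w2 w3. m dvd A + of_bool w1 * B1 + of_bool w2 * B2 + of_bool w3 * B3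
            + of_bool (w1 \<and> w2) * C12 + of_bool (w1 \<and> w3) * C13 + of_bool (w2 \<and> w3) * C23 - b"
  have h: "m dvd A - b" "m dvd A + B1 - b" "m dvd A + B2 - b" "m dvd A + B3 - b"
    "m dvd A + B1 + B2 + C12 - b" "m dvd A + B1 + B3 + C13 - b" "m dvd A + B2 + B3 + C23 - b"
    using H[rule_format, of False False False] H[rule_format, of True False False]
      H[rule_format, of False True False] H[rule_format, of False False True]
      H[rule_format, of True True False] H[rule_format, of True False True]
      H[rule_format, of False True True] by simp_all
  have B: "m dvd B1" "m dvd B2" "m dvd B3"
    using dvd_diff[OF h(2) h(1)] dvd_diff[OF h(3) h(1)] dvd_diff[OF h(4) h(1)] by simp_all
  have "m dvd (A + B1 + B2 + C12 - b) - (A - b) - B1 - B2" "m dvd (A + B1 + B3 + C13 - b) - (A - b) - B1 - B3"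
    "m dvd (A + B2 + B3 + C23 - b) - (A - b) - B2 - B3"
    using h B by (simp_all only: dvd_diff)
  then show "m dvd A - b \<and> m dvd B1 \<and> m dvd B2 \<and> m dvd B3 \<and> m dvd C12 \<and> m dvd C13 \<and> m dvd C23"
    using h(1) B by (simp add: algebra_simps)
next
  assume "m dvd A - b \<and> m dvd B1 \<and> m dvd B2 \<and> m dvd B3 \<and> m dvd C12 \<and> m dvd C13 \<and> m dvd C23"
  then have "m dvd (A - b) + of_bool w1 * B1 + of_bool w2 * B2 + of_bool w3 * B3
            + of_bool (w1 \<and> w2) * C12 + of_bool (w1 \<and> w3) * C13 + of_bool (w2 \<and> w3) * C23" for w1 w2 w3
    by (intro dvd_add dvd_mult) auto
  then show "\<forall>w1 w2 w3. m dvd A + of_bool w1 * B1 + of_bool w2 * B2 + of_bool w3 * B3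
            + of_bool (w1 \<and> w2) * C12 + of_bool (w1 \<and> w3) * C13 + of_bool (w2 \<and> w3) * C23 - b"
    by (simp add: algebra_simps)
qed

lemma idot_cube_point:
  "idot n (\<lambda>i. x i + of_bool w1 * h1 i + of_bool w2 * h2 i + of_bool w3 * h3 i) r
   = idot n x r + of_bool w1 * idot n h1 r + of_bool w2 * idot n h2 r + of_bool w3 * idot n h3 r"
  by (simp add: idot_def algebra_simps sum.distrib sum_distrib_left)

lemma bform_cube_point:
  assumes sym: "symmetric_mat n M"
  shows "bform n M (\<lambda>i. x i + of_bool w1 * h1 i + of_bool w2 * h2 i + of_bool w3 * h3 i)
     (\<lambda>i. x i + of_bool w1 * h1 i + of_bool w2 * h2 i + of_bool w3 * h3 i)
   = bform n M x x + of_bool w1 * (2 * bform n M x h1 + bform n M h1 h1)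
     + of_bool w2 * (2 * bform n M x h2 + bform n M h2 h2) + of_bool w3 * (2 * bform n M x h3 + bform n M h3 h3)
     + of_bool (w1 \<and> w2) * (2 * bform n M h1 h2) + of_bool (w1 \<and> w3) * (2 * bform n M h1 h3)
     + of_bool (w2 \<and> w3) * (2 * bform n M h2 h3)"
  using bform_commute[OF sym, of h1 x] bform_commute[OF sym, of h2 x] bform_commute[OF sym, of h3 x]
    bform_commute[OF sym, of h2 h1] bform_commute[OF sym, of h3 h1] bform_commute[OF sym, of h3 h2]
  by (cases w1; cases w2; cases w3)
     (simp_all add: bform_add_left bform_add_right bform_scale_left bform_scale_right algebra_simps)

lemma cube_point_mod:
  "vadd p (vadd p (vadd p x (if w1 then h1 else (\<lambda>_. 0))) (if w2 then h2 else (\<lambda>_. 0)))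
     (if w3 then h3 else (\<lambda>_. 0)) i mod int p
   = (x i + of_bool w1 * h1 i + of_bool w2 * h2 i + of_bool w3 * h3 i) mod int p"
  by (cases w1; cases w2; cases w3) (simp_all add: vadd_def mod_simps)

lemma mem_atom_iff:
  assumes B: "B = {x \<in> Fpn p n. beta_factor p n rs Ms x = (a, b)}"
    and ab: "length a = length rs" "length b = length Ms" "set a \<subseteq> {0..<int p}" "set b \<subseteq> {0..<int p}"
  shows "y \<in> B \<longleftrightarrow> y \<in> Fpn p n \<and> (\<forall>k<length rs. int p dvd idot n y (rs ! k) - a ! k)
           \<and> (\<forall>k<length Ms. int p dvd bform n (Ms ! k) y y - b ! k)"
proof -
  have "dotp p n y (rs ! k) = a ! k \<longleftrightarrow> int p dvd idot n y (rs ! k) - a ! k" if "k < length rs" for k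
  proof -
    have "a ! k \<in> set a" using ab(1) that by simp
    then have "a ! k \<in> {0..<int p}" using ab(3) by blast
    then show ?thesis unfolding dotp_def idot_def[symmetric] by (intro mod_eq_iff_dvd_diff) auto
  qed
  moreover have "bilin p n (Ms ! k) y y = b ! k \<longleftrightarrow> int p dvd bform n (Ms ! k) y y - b ! k"
    if "k < length Ms" for k
  proof -
    have "b ! k \<in> set b" using ab(2) that by simp
    then have "b ! k \<in> {0..<int p}" using ab(4) by blast
    then show ?thesis unfolding bilin_def bform_def[symmetric] by (intro mod_eq_iff_dvd_diff) auto
  qed
  ultimately show ?thesis
    using ab by (auto simp: B beta_factor_def list_eq_iff_nth_eq)
qed

(* With h0 = x and w0 = 1, q(x + w1 h1 + w2 h2 + w3 h3) is the sum over r, c < 4 of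
   w_r w_c q(h_r, h_c). The block (r, c) thus contributes to the monomial of {r, c} - {0};
   cube_block numbers the seven monomials 1, w1, w2, w3, w1 w2, w1 w3, w2 w3 as 0, ..., 6. *)
definition cube_block :: "nat \<Rightarrow> nat \<Rightarrow> nat" where
  "cube_block r c = (if r = 0 then c else if c = 0 \<or> c = r then r else r + c + 1)"

lemma cube_block_commute: "cube_block r c = cube_block c r"
  by (simp add: cube_block_def)

lemma cube_block_less: "r < 4 \<Longrightarrow> c < 4 \<Longrightarrow> cube_block r c < 7"
  by (simp add: cube_block_def)

lemma cube_block_surj:
  assumes "s < 7"
  shows "\<exists>r<4. \<exists>c<4. cube_block r c = s"
proof -
  have "cube_block 0 s = s" "cube_block 1 2 = 4" "cube_block 1 3 = 5" "cube_block 2 3 = 6"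
    by (simp_all add: cube_block_def)
  moreover have "(0::nat) < 4" "(1::nat) < 4" "(2::nat) < 4" "(3::nat) < 4" "s < 4 \<or> s = 4 \<or> s = 5 \<or> s = 6"
    using assms by linarith+
  ultimately show ?thesis
    by (elim disjE) (blast, blast, blast, blast)
qed

definition phase_index :: "nat \<Rightarrow> nat \<Rightarrow> (nat \<times> nat \<times> nat) set" where
  "phase_index l q = {0} \<times> {..<l} \<times> {..<4} \<union> {1} \<times> {..<q} \<times> {..<7}"

(* (0, k, s): the linear form r_k on block s; (1, k, s): the coefficient of the s-th
   monomial in q_k(x + w1 h1 + w2 h2 + w3 h3). *)
definition phase :: "nat \<Rightarrow> vec list \<Rightarrow> mat list \<Rightarrow> nat \<times> nat \<times> nat \<Rightarrow> vec \<Rightarrow> int" where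
  "phase n rs Ms j y = (case j of (t, k, s) \<Rightarrow>
     if t = 0 then idot n (slice n y s) (rs ! k)
     else (\<Sum>r<4. \<Sum>c<4. if cube_block r c = s then bform n (Ms ! k) (slice n y r) (slice n y c) else 0))"

definition phase_target :: "int list \<Rightarrow> int list \<Rightarrow> nat \<times> nat \<times> nat \<Rightarrow> int" where
  "phase_target a b j = (case j of (t, k, s) \<Rightarrow> if s \<noteq> 0 then 0 else if t = 0 then a ! k else b ! k)"

lemma phase_linear: "phase n rs Ms (0, k, s) y = idot n (slice n y s) (rs ! k)"
  by (simp add: phase_def)

lemma phase_quadratic:
  fixes y :: vec
  assumes "symmetric_mat n (Ms ! k)"
  defines "q \<equiv> \<lambda>r c. bform n (Ms ! k) (slice n y r) (slice n y c)"
  shows "phase n rs Ms (1, k, 0) y = q 0 0"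
    "phase n rs Ms (1, k, 1) y = 2 * q 0 1 + q 1 1"
    "phase n rs Ms (1, k, 2) y = 2 * q 0 2 + q 2 2"
    "phase n rs Ms (1, k, 3) y = 2 * q 0 3 + q 3 3"
    "phase n rs Ms (1, k, 4) y = 2 * q 1 2"
    "phase n rs Ms (1, k, 5) y = 2 * q 1 3"
    "phase n rs Ms (1, k, 6) y = 2 * q 2 3"
  using bform_commute[OF assms(1), of "slice n y 1" "slice n y 0"]
    bform_commute[OF assms(1), of "slice n y 2" "slice n y 0"]
    bform_commute[OF assms(1), of "slice n y 3" "slice n y 0"]
    bform_commute[OF assms(1), of "slice n y 2" "slice n y 1"]
    bform_commute[OF assms(1), of "slice n y 3" "slice n y 1"]
    bform_commute[OF assms(1), of "slice n y 3" "slice n y 2"]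
  by (simp_all add: phase_def q_def cube_block_def numeral_eq_Suc)

lemma ball_phase_index_iff:
  "(\<forall>j\<in>phase_index l q. P j) \<longleftrightarrow> (\<forall>k<l. \<forall>s<4. P (0, k, s)) \<and> (\<forall>k<q. \<forall>s<7. P (1, k, s))"
  by (auto simp: phase_index_def)

lemma finite_phase_index: "finite (phase_index l q)"
  by (simp add: phase_index_def)

lemma card_phase_index: "card (phase_index l q) = 4 * l + 7 * q"
proof -
  have "card (phase_index l q) = card ({0::nat} \<times> {..<l} \<times> {..<4::nat}) + card ({1::nat} \<times> {..<q} \<times> {..<7::nat})"
    unfolding phase_index_def by (rule card_Un_disjoint) auto
  then show ?thesis by (simp add: card_cartesian_product)
qed

lemma all_less_4: "(\<forall>s<4. P s) \<longleftrightarrow> P 0 \<and> P 1 \<and> P 2 \<and> P (3::nat)"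
  by (simp add: lessThan_nat_numeral lessThan_Suc flip: lessThan_iff) blast

lemma all_less_7: "(\<forall>s<7. P s) \<longleftrightarrow> P 0 \<and> P 1 \<and> P 2 \<and> P 3 \<and> P 4 \<and> P 5 \<and> P (6::nat)"
  by (simp add: lessThan_nat_numeral lessThan_Suc flip: lessThan_iff) blast

definition cube_coords :: "nat \<Rightarrow> vec \<Rightarrow> vec \<times> vec \<times> vec \<times> vec" where
  "cube_coords n y = (slice n y 0, slice n y 1, slice n y 2, slice n y 3)"

lemma inj_on_cube_coords: "inj_on (cube_coords n) (Fpn p (4 * n))"
proof (rule inj_onI)
  fix y y' assume y: "y \<in> Fpn p (4 * n)" "y' \<in> Fpn p (4 * n)" and eq: "cube_coords n y = cube_coords n y'"
  have slices: "slice n y c = slice n y' c" if "c < 4" for c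
    using eq that by (auto simp: cube_coords_def numeral_eq_Suc less_Suc_eq)
  show "y = y'"
  proof
    fix i show "y i = y' i"
    proof (cases "i < 4 * n")
      case True
      then have "n > 0" "i div n < 4" by (simp_all add: less_mult_imp_div_less mult.commute)
      then show ?thesis using slices by (metis slice_div_mod)
    qed (use y in \<open>simp add: Fpn_def\<close>)
  qed
qed

lemma cube_coords_image: "cube_coords n ` Fpn p (4 * n) = Fpn p n \<times> Fpn p n \<times> Fpn p n \<times> Fpn p n"
proof
  show "cube_coords n ` Fpn p (4 * n) \<subseteq> Fpn p n \<times> Fpn p n \<times> Fpn p n \<times> Fpn p n"
    by (auto simp: cube_coords_def intro!: slice_Fpn)
next
  show "Fpn p n \<times> Fpn p n \<times> Fpn p n \<times> Fpn p n \<subseteq> cube_coords n ` Fpn p (4 * n)"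
  proof clarify
    fix x h1 h2 h3 assume z: "x \<in> Fpn p n" "h1 \<in> Fpn p n" "h2 \<in> Fpn p n" "h3 \<in> Fpn p n"
    define y where "y i = (if i < 4 * n then ([x, h1, h2, h3] ! (i div n)) (i mod n) else 0)" for i
    have slice_y: "slice n y c = [x, h1, h2, h3] ! c" if "c < 4" for c
    proof
      fix j
      have "[x, h1, h2, h3] ! c \<in> Fpn p n"
        using z that by (auto simp: numeral_eq_Suc less_Suc_eq)
      then show "slice n y c j = ([x, h1, h2, h3] ! c) j"
        using that by (auto simp: slice_def y_def block_index_less Fpn_def)
    qed
    have "y \<in> Fpn p (4 * n)"
    proof -
      have "[x, h1, h2, h3] ! (i div n) \<in> Fpn p n" if "i < 4 * n" for i
        using z that less_mult_imp_div_less[of i 4 n]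
        by (auto simp: numeral_eq_Suc less_Suc_eq mult.commute)
      moreover have "n > 0" if "i < 4 * n" for i using that by (cases "n = 0") simp_all
      ultimately show ?thesis by (auto simp: Fpn_def y_def)
    qed
    moreover have "cube_coords n y = (x, h1, h2, h3)"
      by (simp add: cube_coords_def slice_y)
    ultimately show "(x, h1, h2, h3) \<in> cube_coords n ` Fpn p (4 * n)"
      by (metis image_eqI)
  qed
qed

lemma mem_Omega_iff:
  assumes p: "p > 0" and B: "B = {x \<in> Fpn p n. beta_factor p n rs Ms x = (a, b)}"
    and ab: "length a = length rs" "length b = length Ms" "set a \<subseteq> {0..<int p}" "set b \<subseteq> {0..<int p}"
    and sym: "\<forall>M\<in>set Ms. symmetric_mat n M"
    and z: "x \<in> Fpn p n" "h1 \<in> Fpn p n" "h2 \<in> Fpn p n" "h3 \<in> Fpn p n"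
  shows "(x, h1, h2, h3) \<in> Omega p n B \<longleftrightarrow>
    (\<forall>k<length rs. let r = rs ! k in int p dvd idot n x r - a ! k
       \<and> int p dvd idot n h1 r \<and> int p dvd idot n h2 r \<and> int p dvd idot n h3 r)
    \<and> (\<forall>k<length Ms. let q = bform n (Ms ! k) in int p dvd q x x - b ! k
       \<and> int p dvd 2 * q x h1 + q h1 h1 \<and> int p dvd 2 * q x h2 + q h2 h2 \<and> int p dvd 2 * q x h3 + q h3 h3
       \<and> int p dvd 2 * q h1 h2 \<and> int p dvd 2 * q h1 h3 \<and> int p dvd 2 * q h2 h3)"
proof -
  define P where "P w1 w2 w3 = vadd p (vadd p (vadd p x (if w1 then h1 else (\<lambda>_. 0)))
    (if w2 then h2 else (\<lambda>_. 0))) (if w3 then h3 else (\<lambda>_. 0))" for w1 w2 w3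
  define L where "L k w1 w2 w3 = idot n x (rs ! k) + of_bool w1 * idot n h1 (rs ! k)
    + of_bool w2 * idot n h2 (rs ! k) + of_bool w3 * idot n h3 (rs ! k)" for k w1 w2 w3
  define Q where "Q k w1 w2 w3 = (let q = bform n (Ms ! k) in q x x + of_bool w1 * (2 * q x h1 + q h1 h1)
     + of_bool w2 * (2 * q x h2 + q h2 h2) + of_bool w3 * (2 * q x h3 + q h3 h3)
     + of_bool (w1 \<and> w2) * (2 * q h1 h2) + of_bool (w1 \<and> w3) * (2 * q h1 h3)
     + of_bool (w2 \<and> w3) * (2 * q h2 h3))" for k w1 w2 w3
  have P_Fpn: "P w1 w2 w3 \<in> Fpn p n" for w1 w2 w3
  proof -
    have "(\<lambda>_. 0) \<in> Fpn p n" using p by (simp add: Fpn_def)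
    then show ?thesis unfolding P_def using z by (intro vadd_Fpn[OF p]) auto
  qed
  have P_mod: "P w1 w2 w3 i mod int p = (x i + of_bool w1 * h1 i + of_bool w2 * h2 i + of_bool w3 * h3 i) mod int p"
    for w1 w2 w3 i
    unfolding P_def by (rule cube_point_mod)
  have L: "int p dvd idot n (P w1 w2 w3) (rs ! k) - a ! k \<longleftrightarrow> int p dvd L k w1 w2 w3 - a ! k" for k w1 w2 w3
    unfolding L_def idot_cube_point[symmetric] by (intro mod_eq_imp_dvd_diff_iff idot_mod_cong P_mod)
  have Q: "int p dvd bform n (Ms ! k) (P w1 w2 w3) (P w1 w2 w3) - b ! k \<longleftrightarrow> int p dvd Q k w1 w2 w3 - b ! k"
    if "k < length Ms" for k w1 w2 w3
    using sym that unfolding Q_def Let_def bform_cube_point[OF bspec[OF sym nth_mem[OF that]], symmetric]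
    by (intro mod_eq_imp_dvd_diff_iff bform_mod_cong P_mod)
  have "(x, h1, h2, h3) \<in> Omega p n B \<longleftrightarrow> (\<forall>w1 w2 w3. P w1 w2 w3 \<in> B)"
    using z by (simp add: Omega_def P_def)
  also have "\<dots> \<longleftrightarrow> (\<forall>k<length rs. \<forall>w1 w2 w3. int p dvd L k w1 w2 w3 - a ! k)
      \<and> (\<forall>k<length Ms. \<forall>w1 w2 w3. int p dvd Q k w1 w2 w3 - b ! k)"
    using P_Fpn L Q by (auto simp: mem_atom_iff[OF B ab])
  finally show ?thesis
    unfolding L_def Q_def Let_def dvd_cube_affine_iff dvd_cube_quadratic_iff .
qed

lemma cube_coords_mem_Omega_iff:
  assumes p: "p > 0" and B: "B = {x \<in> Fpn p n. beta_factor p n rs Ms x = (a, b)}"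
    and ab: "length a = length rs" "length b = length Ms" "set a \<subseteq> {0..<int p}" "set b \<subseteq> {0..<int p}"
    and sym: "\<forall>M\<in>set Ms. symmetric_mat n M" and y: "y \<in> Fpn p (4 * n)"
  shows "cube_coords n y \<in> Omega p n B \<longleftrightarrow>
    (\<forall>j\<in>phase_index (length rs) (length Ms). int p dvd phase n rs Ms j y - phase_target a b j)"
proof -
  have z: "slice n y 0 \<in> Fpn p n" "slice n y 1 \<in> Fpn p n" "slice n y 2 \<in> Fpn p n" "slice n y 3 \<in> Fpn p n"
    using y by (simp_all add: slice_Fpn)
  have "k < length Ms \<Longrightarrow> symmetric_mat n (Ms ! k)" for k
    using sym by simp
  then show ?thesis
    unfolding cube_coords_def mem_Omega_iff[OF p B ab sym z] ball_phase_index_iff all_less_4 all_less_7 Let_def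
    by (auto simp: phase_linear phase_quadratic[unfolded One_nat_def] phase_target_def)
qed

lemma card_Omega_eq_card_phase_solutions:
  assumes p: "p > 0" and B: "B = {x \<in> Fpn p n. beta_factor p n rs Ms x = (a, b)}"
    and ab: "length a = length rs" "length b = length Ms" "set a \<subseteq> {0..<int p}" "set b \<subseteq> {0..<int p}"
    and sym: "\<forall>M\<in>set Ms. symmetric_mat n M"
  shows "card (Omega p n B) = card {y \<in> Fpn p (4 * n).
    \<forall>j\<in>phase_index (length rs) (length Ms). int p dvd phase n rs Ms j y - phase_target a b j}"
    (is "_ = card ?Y")
proof -
  have "Omega p n B = cube_coords n ` ?Y"
  proof
    show "Omega p n B \<subseteq> cube_coords n ` ?Y"
    proof
      fix z assume z: "z \<in> Omega p n B"
      then have "z \<in> cube_coords n ` Fpn p (4 * n)"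
        unfolding cube_coords_image by (auto simp: Omega_def)
      then obtain y where "y \<in> Fpn p (4 * n)" "z = cube_coords n y" by blast
      then show "z \<in> cube_coords n ` ?Y"
        using z cube_coords_mem_Omega_iff[OF p B ab sym] by blast
    qed
    show "cube_coords n ` ?Y \<subseteq> Omega p n B"
      using cube_coords_mem_Omega_iff[OF p B ab sym] by blast
  qed
  moreover have "inj_on (cube_coords n) ?Y"
    using inj_on_cube_coords by (rule inj_on_subset) blast
  ultimately show ?thesis
    by (simp add: card_image)
qed

section \<open>Character sums of the phases\<close>

definition combined_form :: "vec list \<Rightarrow> (nat \<times> nat \<times> nat \<Rightarrow> int) \<Rightarrow> nat \<Rightarrow> vec" where
  "combined_form rs t s = (\<lambda>i. \<Sum>k<length rs. t (0, k, s) * (rs ! k) i)"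

definition combined_matrix :: "mat list \<Rightarrow> (nat \<times> nat \<times> nat \<Rightarrow> int) \<Rightarrow> nat \<Rightarrow> mat" where
  "combined_matrix Ms t s = (\<lambda>i i'. \<Sum>k<length Ms. t (1, k, s) * (Ms ! k) i i')"

definition phase_matrix :: "nat \<Rightarrow> mat list \<Rightarrow> (nat \<times> nat \<times> nat \<Rightarrow> int) \<Rightarrow> mat" where
  "phase_matrix n Ms t = blockmat n (\<lambda>r c. combined_matrix Ms t (cube_block r c))"

lemma sum_phases_eq:
  "(\<Sum>j\<in>phase_index (length rs) (length Ms). t j * phase n rs Ms j y)
   = idot (4 * n) y (blockvec n (combined_form rs t)) + bform (4 * n) (phase_matrix n Ms t) y y"
proof -
  define l q where "l = length rs" and "q = length Ms"
  have disj: "({0} \<times> {..<l} \<times> {..<4}) \<inter> ({1} \<times> {..<q} \<times> {..<7::nat}) = ({} :: (nat \<times> nat \<times> nat) set)"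
    by auto
  have lin: "(\<Sum>j\<in>{0} \<times> {..<l} \<times> {..<4}. t j * phase n rs Ms j y)
      = idot (4 * n) y (blockvec n (combined_form rs t))"
  proof -
    have "(\<Sum>j\<in>{0} \<times> {..<l} \<times> {..<4}. t j * phase n rs Ms j y)
        = (\<Sum>k<l. \<Sum>s<4. t (0, k, s) * idot n (slice n y s) (rs ! k))"
      by (simp add: sum.cartesian_product' phase_linear)
    also have "\<dots> = (\<Sum>s<4. idot n (slice n y s) (combined_form rs t s))"
      by (subst sum.swap) (simp add: idot_sum_right combined_form_def l_def)
    finally show ?thesis by (simp add: idot_blockvec)
  qed
  have quad: "(\<Sum>j\<in>{1} \<times> {..<q} \<times> {..<7}. t j * phase n rs Ms j y) = bform (4 * n) (phase_matrix n Ms t) y y"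
  proof -
    have "(\<Sum>j\<in>{1} \<times> {..<q} \<times> {..<7}. t j * phase n rs Ms j y)
        = (\<Sum>k<q. \<Sum>s<7. \<Sum>r<4. \<Sum>c<4.
             if cube_block r c = s then t (1, k, s) * bform n (Ms ! k) (slice n y r) (slice n y c) else 0)"
      by (simp add: sum.cartesian_product' phase_def sum_distrib_left if_distrib[of "(*) _"] cong: if_cong)
    also have "\<dots> = (\<Sum>k<q. \<Sum>r<4. \<Sum>c<4. \<Sum>s<7.
             if cube_block r c = s then t (1, k, s) * bform n (Ms ! k) (slice n y r) (slice n y c) else 0)"
      by (rule sum.cong[OF refl], rule trans[OF sum.swap], rule sum.cong[OF refl], rule sum.swap)
    also have "\<dots> = (\<Sum>k<q. \<Sum>r<4. \<Sum>c<4. t (1, k, cube_block r c) * bform n (Ms ! k) (slice n y r) (slice n y c))"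
      by (intro sum.cong refl) (simp add: cube_block_less)
    also have "\<dots> = (\<Sum>r<4. \<Sum>c<4. bform n (combined_matrix Ms t (cube_block r c)) (slice n y r) (slice n y c))"
      unfolding q_def by (simp add: combined_matrix_def bform_sum_mat sum.swap[of _ "{..<length Ms}"])
    finally show ?thesis by (simp add: phase_matrix_def bform_blockmat)
  qed
  have "(\<Sum>j\<in>phase_index l q. t j * phase n rs Ms j y)
      = (\<Sum>j\<in>{0} \<times> {..<l} \<times> {..<4}. t j * phase n rs Ms j y) + (\<Sum>j\<in>{1} \<times> {..<q} \<times> {..<7}. t j * phase n rs Ms j y)"
    unfolding phase_index_def by (rule sum.union_disjoint) (use disj in auto)
  then have "(\<Sum>j\<in>phase_index l q. t j * phase n rs Ms j y)
      = idot (4 * n) y (blockvec n (combined_form rs t)) + bform (4 * n) (phase_matrix n Ms t) y y"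
    by (simp only: lin quad)
  then show ?thesis by (simp only: l_def q_def)
qed

lemma symmetric_phase_matrix:
  assumes "\<forall>M\<in>set Ms. symmetric_mat n M"
  shows "symmetric_mat (4 * n) (phase_matrix n Ms t)"
  unfolding phase_matrix_def
proof (rule symmetric_blockmat)
  fix r c i j assume "i < n" "j < n"
  then have "(Ms ! k) i j = (Ms ! k) j i" if "k < length Ms" for k
    using assms that by (auto simp: symmetric_mat_def)
  then show "combined_matrix Ms t (cube_block r c) i j = combined_matrix Ms t (cube_block c r) j i"
    by (simp add: combined_matrix_def cube_block_commute)
qed

lemma quad_rank_le_phase_matrix:
  assumes "t \<in> PiE (phase_index l (length Ms)) (\<lambda>_. {0..<int p})"
    and "k < length Ms" "s < 7" "t (1, k, s) \<noteq> 0"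
  shows "quad_rank p n Ms \<le> mat_rank p (4 * n) (\<lambda>i j. phase_matrix n Ms t i j mod int p)"
proof -
  obtain r c where rc: "r < 4" "c < 4" "cube_block r c = s"
    using cube_block_surj[OF \<open>s < 7\<close>] by blast
  have "\<forall>k'<length Ms. 0 \<le> t (1, k', s) \<and> t (1, k', s) < int p"
  proof (intro allI impI)
    fix k' assume "k' < length Ms"
    then have "(1, k', s) \<in> phase_index l (length Ms)"
      using \<open>s < 7\<close> by (simp add: phase_index_def)
    then show "0 \<le> t (1, k', s) \<and> t (1, k', s) < int p"
      using PiE_mem[OF assms(1)] by auto
  qed
  then have "quad_rank p n Ms \<le> mat_rank p n (\<lambda>i j. combined_matrix Ms t s i j mod int p)"
    unfolding combined_matrix_def using assms(2,4) by (intro quad_rank_le_mat_rank) auto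
  also have "\<dots> \<le> mat_rank p (4 * n) (\<lambda>i j. phase_matrix n Ms t i j mod int p)"
    using mat_rank_block_le[OF rc(1,2), of p n "\<lambda>r c. combined_matrix Ms t (cube_block r c)"]
    by (simp add: phase_matrix_def rc(3))
  finally show ?thesis .
qed

lemma bform_phase_matrix_eq_0:
  assumes "\<forall>k<length Ms. \<forall>s<7. t (1, k, s) = 0"
  shows "bform (4 * n) (phase_matrix n Ms t) y y = 0"
proof -
  have zero: "combined_matrix Ms t (cube_block r c) = (\<lambda>_ _. 0)" if "r < 4" "c < 4" for r c
    using assms cube_block_less[OF that] by (auto simp: combined_matrix_def fun_eq_iff)
  have "bform (4 * n) (phase_matrix n Ms t) y y
      = (\<Sum>r<4. \<Sum>c<4. bform n (combined_matrix Ms t (cube_block r c)) (slice n y r) (slice n y c))"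
    by (simp add: phase_matrix_def bform_blockmat)
  also have "\<dots> = 0"
    by (intro sum.neutral ballI) (simp add: zero bform_def)
  finally show ?thesis .
qed

lemma combined_form_not_dvd:
  assumes lin: "is_linear_factor p n rs"
    and t: "t \<in> PiE (phase_index (length rs) q) (\<lambda>_. {0..<int p})"
    and ks: "k < length rs" "s < 4" "t (0, k, s) \<noteq> 0"
  shows "\<not> (\<forall>i<4 * n. int p dvd blockvec n (combined_form rs t) i)"
proof
  assume dvd: "\<forall>i<4 * n. int p dvd blockvec n (combined_form rs t) i"
  have "(\<forall>k'\<in>{..<length rs}. 0 \<le> t (0, k', s) \<and> t (0, k', s) < int p)
      \<and> (\<forall>i<n. (\<Sum>k'\<in>{..<length rs}. t (0, k', s) * (rs ! k') i) mod int p = 0)"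
  proof (intro conjI ballI allI impI)
    fix k' assume "k' \<in> {..<length rs}"
    then have "(0, k', s) \<in> phase_index (length rs) q"
      using ks by (simp add: phase_index_def)
    then show "0 \<le> t (0, k', s)" "t (0, k', s) < int p"
      using PiE_mem[OF t] by auto
  next
    fix i assume "i < n"
    then have "int p dvd blockvec n (combined_form rs t) (s * n + i)"
      using dvd ks(2) by (simp add: block_index_less)
    then show "(\<Sum>k'\<in>{..<length rs}. t (0, k', s) * (rs ! k') i) mod int p = 0"
      using \<open>i < n\<close> by (simp add: blockvec_def combined_form_def)
  qed
  moreover have "lin_indep_Fp p n {..<length rs} (\<lambda>k. rs ! k)"
    using lin by (simp add: is_linear_factor_def)
  ultimately have "\<forall>k'\<in>{..<length rs}. t (0, k', s) = 0"
    unfolding lin_indep_Fp_def by (rule mp[OF spec[of _ "\<lambda>k'. t (0, k', s)"], rotated])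
  then show False using ks by simp
qed

lemma norm_sum_phases_le:
  assumes p: "prime p" "odd p" and lin: "is_linear_factor p n rs" and quad: "is_purely_quadratic_factor p n Ms"
    and t: "t \<in> PiE (phase_index (length rs) (length Ms)) (\<lambda>_. {0..<int p})"
    and nz: "\<exists>j\<in>phase_index (length rs) (length Ms). t j \<noteq> 0"
  shows "norm (\<Sum>y\<in>Fpn p (4 * n). ep p (\<Sum>j\<in>phase_index (length rs) (length Ms). t j * phase n rs Ms j y))
    \<le> real p powr (4 * real n - real (quad_rank p n Ms) / 2)"
proof (cases "\<exists>k<length Ms. \<exists>s<7. t (1, k, s) \<noteq> 0")
  case True
  have sym: "symmetric_mat (4 * n) (phase_matrix n Ms t)"
    using quad by (intro symmetric_phase_matrix) (simp add: is_purely_quadratic_factor_def)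
  from True obtain k s where "k < length Ms" "s < 7" "t (1, k, s) \<noteq> 0" by blast
  then have "quad_rank p n Ms \<le> mat_rank p (4 * n) (\<lambda>i j. phase_matrix n Ms t i j mod int p)"
    by (rule quad_rank_le_phase_matrix[OF t])
  then have "real p powr (real (4 * n) - real (mat_rank p (4 * n) (\<lambda>i j. phase_matrix n Ms t i j mod int p)) / 2)
      \<le> real p powr (4 * real n - real (quad_rank p n Ms) / 2)"
    using prime_gt_1_nat[OF p(1)] by (intro powr_mono) auto
  then show ?thesis
    using quadratic_char_sum_norm_le[OF p sym, of "blockvec n (combined_form rs t)"]
    unfolding sum_phases_eq by linarith
next
  case False
  then obtain k s where "k < length rs" "s < 4" "t (0, k, s) \<noteq> 0"
    using nz by (auto simp: phase_index_def)
  then have "\<not> (\<forall>i<4 * n. int p dvd blockvec n (combined_form rs t) i)"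
    using combined_form_not_dvd[OF lin t] by blast
  then have "(\<Sum>y\<in>Fpn p (4 * n). ep p (idot (4 * n) y (blockvec n (combined_form rs t)))) = 0"
    using prime_gt_0_nat[OF p(1)] by (simp add: sum_ep_idot)
  then show ?thesis
    using False by (simp add: sum_phases_eq bform_phase_matrix_eq_0)
qed

lemma card_Omega_deviation_le:
  assumes p: "prime p" "odd p" and lin: "is_linear_factor p n rs" and quad: "is_purely_quadratic_factor p n Ms"
    and B: "B \<in> atoms p n rs Ms"
  shows "\<bar>real (card (Omega p n B)) - real p ^ (4 * n) / real p ^ (4 * length rs + 7 * length Ms)\<bar>
    \<le> real p powr (4 * real n - real (quad_rank p n Ms) / 2)"
proof -
  have p0: "p > 0" using p(1) prime_gt_0_nat by blast
  obtain a b where B_eq: "B = {x \<in> Fpn p n. beta_factor p n rs Ms x = (a, b)}"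
    and ab: "length a = length rs" "length b = length Ms" "set a \<subseteq> {0..<int p}" "set b \<subseteq> {0..<int p}"
    using B unfolding atoms_def by blast
  have sym: "\<forall>M\<in>set Ms. symmetric_mat n M"
    using quad by (simp add: is_purely_quadratic_factor_def)
  have "\<bar>real (card {y \<in> Fpn p (4 * n). \<forall>j\<in>phase_index (length rs) (length Ms).
          int p dvd phase n rs Ms j y - phase_target a b j})
        - real (card (Fpn p (4 * n))) / real p ^ card (phase_index (length rs) (length Ms))\<bar>
    \<le> real p powr (4 * real n - real (quad_rank p n Ms) / 2)"
    using norm_sum_phases_le[OF p lin quad]
    by (intro card_solutions_deviation_le[OF p0 finite_Fpn finite_phase_index]) simp_all
  then show ?thesis
    by (simp add: card_Omega_eq_card_phase_solutions[OF p0 B_eq ab sym] card_Fpn card_phase_index)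
qed

lemma powr_le_of_rank_bound:
  fixes p :: real
  assumes "p > 1" "0 < \<epsilon>" "\<epsilon> < 1" "l \<ge> 0"
    and R: "R \<ge> 14 * (l + q + log p (1 / \<epsilon>))"
  shows "p powr (4 * N - R / 2) \<le> \<epsilon> * p powr (4 * N - 4 * l - 7 * q)"
proof -
  have "log p (1 / \<epsilon>) > 0"
    using assms by simp
  then have "4 * N - R / 2 \<le> (4 * N - 4 * l - 7 * q) - log p (1 / \<epsilon>)"
    using R \<open>l \<ge> 0\<close> by simp
  then have "p powr (4 * N - R / 2) \<le> p powr ((4 * N - 4 * l - 7 * q) - log p (1 / \<epsilon>))"
    using \<open>p > 1\<close> by (simp add: powr_mono)
  also have "\<dots> = p powr (4 * N - 4 * l - 7 * q) / p powr (log p (1 / \<epsilon>))"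
    by (rule powr_diff)
  also have "\<dots> = \<epsilon> * p powr (4 * N - 4 * l - 7 * q)"
    using assms by simp
  finally show ?thesis .
qed

theorem mainTheorem6:
  fixes p :: nat
  assumes "prime p" and "odd p"
  shows "\<exists>C::real. C > 0 \<and>
    (\<forall>(\<epsilon>::real) (n::nat) rs Ms B.
       0 < \<epsilon> \<and> \<epsilon> < 1 \<and>
       is_linear_factor p n rs \<and> is_purely_quadratic_factor p n Ms \<and>
       real (quad_rank p n Ms) \<ge> C * (real (length rs) + real (length Ms) + log (real p) (1 / \<epsilon>)) \<and>
       B \<in> atoms p n rs Ms
       \<longrightarrow>
       \<bar>real (card (Omega p n B)) - real p powr (4 * real n - 4 * real (length rs) - 7 * real (length Ms))\<bar>
         \<le> \<epsilon> * real p powr (4 * real n - 4 * real (length rs) - 7 * real (length Ms)))"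
proof (intro exI[of _ 14] conjI allI impI)
  fix \<epsilon> :: real and n :: nat and rs Ms B
  assume H: "0 < \<epsilon> \<and> \<epsilon> < 1 \<and> is_linear_factor p n rs \<and> is_purely_quadratic_factor p n Ms \<and>
       real (quad_rank p n Ms) \<ge> 14 * (real (length rs) + real (length Ms) + log (real p) (1 / \<epsilon>)) \<and>
       B \<in> atoms p n rs Ms"
  have p1: "real p > 1" using assms(1) prime_gt_1_nat by simp
  have main_term: "real p ^ (4 * n) / real p ^ (4 * length rs + 7 * length Ms)
      = real p powr (4 * real n - 4 * real (length rs) - 7 * real (length Ms))"
    using p1 by (simp add: powr_diff powr_realpow[symmetric] algebra_simps)
  have "\<bar>real (card (Omega p n B)) - real p powr (4 * real n - 4 * real (length rs) - 7 * real (length Ms))\<bar>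
      \<le> real p powr (4 * real n - real (quad_rank p n Ms) / 2)"
    using card_Omega_deviation_le[OF assms, of n rs Ms B] H by (simp only: main_term)
  moreover have "real p powr (4 * real n - real (quad_rank p n Ms) / 2)
      \<le> \<epsilon> * real p powr (4 * real n - 4 * real (length rs) - 7 * real (length Ms))"
    using H by (intro powr_le_of_rank_bound[OF p1]) simp_all
  ultimately show "\<bar>real (card (Omega p n B)) - real p powr (4 * real n - 4 * real (length rs) - 7 * real (length Ms))\<bar>
         \<le> \<epsilon> * real p powr (4 * real n - 4 * real (length rs) - 7 * real (length Ms))"
    by linarith
qed simp

end
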